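(* Let $G$ be a group with finite generating set $Y$ and let $\mathscr S$ be a retractive family of subsets of $Y$. Then the kernel of $\rho_{\mathscr S}=\prod_{S\in\mathscr S}\rho_S\colon G\to\prod_{S\in\mathscr S}G_S$ is generated by monic commutators whose support is transverse to $\mathscr S$.
   Context: Conventions: $[x,y]=x^{-1}y^{-1}xy$. For $S\subseteq Y$, $G_S$ is the quotient of $G$ by the normal closure of $Y-S$, and $\rho_S\colon G\to G_S$ is the projection. $S$ is retractive if $\rho_S$ restricts to an injection on the subgroup $\langle S\rangle$ ($\emptyset$ is retractive by convention). A retractive family is a family of retractive subsets of $Y$ all of whose intersections are also retractive. The support of $q\in G$ relative to $\mathscr S$ is $\bigcap\{S\in\mathscr S: q\in\langle S\rangle\}$. Monic commutators: for $x\in Y$, $x$ and $x^{-1}$ are monic commutators; if $x,y$ are monic commutators then so is $[x,y]$. A subset $T\subseteq Y$ is transverse to $\mathscr S$ if $T\not\subseteq S$ for every $S\in\mathscr S$. *)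

theory Defs
  imports "HOL-Algebra.Algebra"
begin

definition normal_closure :: "('a, 'b) monoid_scheme \<Rightarrow> 'a set \<Rightarrow> 'a set" where
  "normal_closure G A =
     generate G (\<Union>g\<in>carrier G. (\<lambda>a. inv\<^bsub>G\<^esub> g \<otimes>\<^bsub>G\<^esub> a \<otimes>\<^bsub>G\<^esub> g) ` A)"

definition quotS :: "('a, 'b) monoid_scheme \<Rightarrow> 'a set \<Rightarrow> 'a set \<Rightarrow> 'a set monoid" where
  "quotS G Y S = G Mod (normal_closure G (Y - S))"

definition rhoS :: "('a, 'b) monoid_scheme \<Rightarrow> 'a set \<Rightarrow> 'a set \<Rightarrow> 'a \<Rightarrow> 'a set" where
  "rhoS G Y S = (\<lambda>g. normal_closure G (Y - S) #>\<^bsub>G\<^esub> g)"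

definition retractive :: "('a, 'b) monoid_scheme \<Rightarrow> 'a set \<Rightarrow> 'a set \<Rightarrow> bool" where
  "retractive G Y S \<longleftrightarrow> S \<subseteq> Y \<and> (S = {} \<or> inj_on (rhoS G Y S) (generate G S))"

definition retractive_family :: "('a, 'b) monoid_scheme \<Rightarrow> 'a set \<Rightarrow> 'a set set \<Rightarrow> bool" where
  "retractive_family G Y F \<longleftrightarrow>
     (\<forall>S\<in>F. retractive G Y S) \<and> (\<forall>T. T \<subseteq> F \<and> T \<noteq> {} \<longrightarrow> retractive G Y (\<Inter>T))"

definition support :: "('a, 'b) monoid_scheme \<Rightarrow> 'a set \<Rightarrow> 'a set set \<Rightarrow> 'a \<Rightarrow> 'a set" where
  "support G Y F q = {y\<in>Y. \<forall>S\<in>F. q \<in> generate G S \<longrightarrow> y \<in> S}"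

definition transverse :: "'a set set \<Rightarrow> 'a set \<Rightarrow> bool" where
  "transverse F T \<longleftrightarrow> (\<forall>S\<in>F. \<not> T \<subseteq> S)"

definition commutator :: "('a, 'b) monoid_scheme \<Rightarrow> 'a \<Rightarrow> 'a \<Rightarrow> 'a" where
  "commutator G x y = inv\<^bsub>G\<^esub> x \<otimes>\<^bsub>G\<^esub> inv\<^bsub>G\<^esub> y \<otimes>\<^bsub>G\<^esub> x \<otimes>\<^bsub>G\<^esub> y"

inductive_set monic_comm :: "('a, 'b) monoid_scheme \<Rightarrow> 'a set \<Rightarrow> 'a set"
  for G :: "('a, 'b) monoid_scheme" and Y :: "'a set" where
  gen: "x \<in> Y \<Longrightarrow> x \<in> monic_comm G Y"
| gen_inv: "x \<in> Y \<Longrightarrow> inv\<^bsub>G\<^esub> x \<in> monic_comm G Y"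
| comm: "x \<in> monic_comm G Y \<Longrightarrow> y \<in> monic_comm G Y \<Longrightarrow> commutator G x y \<in> monic_comm G Y"

definition rho_family :: "('a, 'b) monoid_scheme \<Rightarrow> 'a set \<Rightarrow> 'a set set \<Rightarrow> 'a \<Rightarrow> 'a set \<Rightarrow> 'a set" where
  "rho_family G Y F = (\<lambda>g. \<lambda>S\<in>F. rhoS G Y S g)"

end

theory Submission
  imports Defs
begin

text \<open>
  Write \<open>N\<^sub>S\<close> for the normal closure of \<open>Y - S\<close>, so that the kernel \<open>K\<close> of
  \<open>\<rho>\<^sub>\<F>\<close> is the intersection of the \<open>N\<^sub>S\<close>.  Every monic commutator lies either in
  \<open>\<langle>S\<rangle>\<close> or in \<open>N\<^sub>S\<close>, so a monic commutator with transverse support lies in \<open>K\<close>;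
  conversely a nontrivial monic commutator in \<open>K\<close> lies in no \<open>\<langle>S\<rangle>\<close>, because
  retractivity makes \<open>\<langle>S\<rangle> \<inter> N\<^sub>S\<close> trivial, so its support is all of \<open>Y\<close>, which
  is transverse.  It remains to see that \<open>K\<close> is generated by the monic
  commutators it contains, by induction on \<open>\<F>\<close>.  Let \<open>K' \<supseteq> K\<close> be the kernel for
  \<open>\<F> - {T}\<close> and \<open>L\<close> the subgroup generated by the monic commutators in \<open>K\<close>.  Since
  \<open>y a y\<^sup>-\<^sup>1 = a [a, y\<^sup>-\<^sup>1]\<close>, \<open>L\<close> is normal, and each monic generator of \<open>K'\<close> lies in
  \<open>L\<close> or in \<open>\<langle>T\<rangle>\<close>, so \<open>K' \<subseteq> L \<langle>T\<rangle>\<close>.  Writing \<open>g \<in> K\<close> as \<open>l h\<close>, the factor \<open>h\<close>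
  lies in \<open>\<langle>T\<rangle> \<inter> N\<^sub>T = 1\<close>, hence \<open>g \<in> L\<close>.
\<close>

definition family_kernel :: "('a, 'b) monoid_scheme \<Rightarrow> 'a set \<Rightarrow> 'a set set \<Rightarrow> 'a set" where
  "family_kernel G Y F = carrier G \<inter> (\<Inter>S\<in>F. normal_closure G (Y - S))"

context group
begin

lemma generate_conj_closed:
  assumes A: "A \<subseteq> carrier G" and x: "x \<in> carrier G"
    and conj_gen: "\<And>a. a \<in> A \<Longrightarrow> x \<otimes> a \<otimes> inv x \<in> generate G A"
    and h: "h \<in> generate G A"
  shows "x \<otimes> h \<otimes> inv x \<in> generate G A"
  using h
proof (induction h rule: generate.induct)
  case one
  then show ?case using x generate.one by simp
next
  case (incl a)
  then show ?case by (rule conj_gen)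
next
  case (inv a)
  then have "a \<in> carrier G" using A by blast
  then have "x \<otimes> inv a \<otimes> inv x = inv (x \<otimes> a \<otimes> inv x)"
    using x by (simp add: inv_mult_group m_assoc)
  then show ?case
    using generate_m_inv_closed[OF A conj_gen[OF inv]] by simp
next
  case (eng h1 h2)
  have "h1 \<in> carrier G" "h2 \<in> carrier G"
    using eng.hyps generate_in_carrier[OF A] by auto
  then have "x \<otimes> (h1 \<otimes> h2) \<otimes> inv x = (x \<otimes> h1 \<otimes> inv x) \<otimes> (x \<otimes> h2 \<otimes> inv x)"
    using x by (simp add: inv_solve_left m_assoc)
  then show ?case using generate.eng[OF eng.IH] by simp
qed

lemma two_sided_normalizer_subgroup:
  assumes H: "subgroup H G"
  shows "subgroup {g \<in> carrier G. \<forall>h\<in>H. g \<otimes> h \<otimes> inv g \<in> H \<and> inv g \<otimes> h \<otimes> g \<in> H} G"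
    (is "subgroup ?C G")
proof (rule subgroupI)
  show "?C \<noteq> {}"
    using subgroup.subset[OF H] by (auto intro!: exI[of _ \<one>])
next
  fix g k assume g: "g \<in> ?C" and k: "k \<in> ?C"
  have "g \<otimes> k \<otimes> h \<otimes> inv (g \<otimes> k) = g \<otimes> (k \<otimes> h \<otimes> inv k) \<otimes> inv g"
    and "inv (g \<otimes> k) \<otimes> h \<otimes> (g \<otimes> k) = inv k \<otimes> (inv g \<otimes> h \<otimes> g) \<otimes> k"
    if "h \<in> H" for h
    using that g k subgroup.subset[OF H] by (auto simp: inv_mult_group m_assoc)
  then show "g \<otimes> k \<in> ?C" using g k by auto
qed auto

lemma normal_if_normalized_by_generators:
  assumes H: "subgroup H G" and Y: "Y \<subseteq> carrier G" and gen: "generate G Y = carrier G"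
    and normalized: "\<And>y h. y \<in> Y \<Longrightarrow> h \<in> H \<Longrightarrow> y \<otimes> h \<otimes> inv y \<in> H \<and> inv y \<otimes> h \<otimes> y \<in> H"
  shows "H \<lhd> G"
proof (rule normal_invI[OF H])
  have "generate G Y \<subseteq> {g \<in> carrier G. \<forall>h\<in>H. g \<otimes> h \<otimes> inv g \<in> H \<and> inv g \<otimes> h \<otimes> g \<in> H}"
    using Y normalized by (intro generate_subgroup_incl two_sided_normalizer_subgroup H) auto
  then show "x \<otimes> h \<otimes> inv x \<in> H" if "x \<in> carrier G" "h \<in> H" for x h
    using that gen by blast
qed

lemma generate_normal_if_conj_generators:
  assumes A: "A \<subseteq> carrier G" and Y: "Y \<subseteq> carrier G" and gen: "generate G Y = carrier G"
    and conj: "\<And>y a. y \<in> Y \<Longrightarrow> a \<in> A \<Longrightarrow> y \<otimes> a \<otimes> inv y \<in> generate G A"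
    and conj_inv: "\<And>y a. y \<in> Y \<Longrightarrow> a \<in> A \<Longrightarrow> inv y \<otimes> a \<otimes> y \<in> generate G A"
  shows "generate G A \<lhd> G"
proof (rule normal_if_normalized_by_generators[OF generate_is_subgroup[OF A] Y gen])
  fix y h assume y: "y \<in> Y" and h: "h \<in> generate G A"
  have yc: "y \<in> carrier G" using y Y by blast
  have "y \<otimes> h \<otimes> inv y \<in> generate G A"
    by (rule generate_conj_closed[OF A yc conj[OF y] h])
  moreover have "inv y \<otimes> h \<otimes> y \<in> generate G A"
    using generate_conj_closed[OF A _ _ h, of "inv y"] yc conj_inv[OF y] by simp
  ultimately show "y \<otimes> h \<otimes> inv y \<in> generate G A \<and> inv y \<otimes> h \<otimes> y \<in> generate G A" ..
qed

lemma commutator_closed [intro]: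
  "x \<in> carrier G \<Longrightarrow> y \<in> carrier G \<Longrightarrow> commutator G x y \<in> carrier G"
  unfolding commutator_def by simp

lemma subgroup_commutator_closed:
  "subgroup H G \<Longrightarrow> x \<in> H \<Longrightarrow> y \<in> H \<Longrightarrow> commutator G x y \<in> H"
  unfolding commutator_def by (simp add: subgroup.m_closed subgroup.m_inv_closed)

lemma normal_commutator_closed:
  assumes N: "N \<lhd> G" and x: "x \<in> carrier G" and y: "y \<in> carrier G"
    and in_N: "x \<in> N \<or> y \<in> N"
  shows "commutator G x y \<in> N"
proof -
  have sub: "subgroup N G" using N normal_imp_subgroup by blast
  from in_N show ?thesis
  proof
    assume "x \<in> N"
    then have "inv x \<in> N" and "inv y \<otimes> x \<otimes> y \<in> N"
      using subgroup.m_inv_closed[OF sub] normal_invE(2)[OF N inv_closed[OF y]] y by auto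
    then have "inv x \<otimes> (inv y \<otimes> x \<otimes> y) \<in> N"
      using sub y by (simp add: subgroup.m_closed)
    then show ?thesis unfolding commutator_def using x y by (simp add: m_assoc)
  next
    assume "y \<in> N"
    then have "inv x \<otimes> inv y \<otimes> x \<in> N"
      using subgroup.m_inv_closed[OF sub] normal_invE(2)[OF N inv_closed[OF x]] x by auto
    then show ?thesis unfolding commutator_def using \<open>y \<in> N\<close> sub x
      by (simp add: subgroup.m_closed)
  qed
qed

lemma conj_eq_mult_commutator:
  assumes "a \<in> carrier G" "y \<in> carrier G"
  shows "y \<otimes> a \<otimes> inv y = a \<otimes> commutator G a (inv y)"
    and "inv y \<otimes> a \<otimes> y = a \<otimes> commutator G a y"
  unfolding commutator_def using assms by (simp_all add: m_assoc[symmetric])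

lemma generate_subset_normal_set_mult:
  assumes N: "N \<lhd> G" and H: "subgroup H G" and A: "A \<subseteq> N \<union> H"
  shows "generate G A \<subseteq> N <#> H"
proof (rule generate_subgroup_incl[OF _ mult_norm_subgroup[OF N H]])
  have "a \<in> carrier G" if "a \<in> A" for a
    using that A subgroup.subset[OF H] normal_imp_subgroup[OF N] subgroup.subset by blast
  then have "a = a \<otimes> \<one> \<and> a = \<one> \<otimes> a" if "a \<in> A" for a
    using that by simp
  then show "A \<subseteq> N <#> H"
    using A subgroup.one_closed[OF H] subgroup.one_closed[OF normal_imp_subgroup[OF N]]
    unfolding set_mult_def by blast
qed

lemma normal_closure_normal:
  assumes A: "A \<subseteq> carrier G"
  shows "normal_closure G A \<lhd> G"
  unfolding normal_closure_def
proof (rule normal_generateI)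
  show "(\<Union>g\<in>carrier G. (\<lambda>a. inv g \<otimes> a \<otimes> g) ` A) \<subseteq> carrier G"
    using A by auto
next
  fix h g assume "h \<in> (\<Union>g\<in>carrier G. (\<lambda>a. inv g \<otimes> a \<otimes> g) ` A)" and g: "g \<in> carrier G"
  then obtain k a where k: "k \<in> carrier G" and a: "a \<in> A" and h: "h = inv k \<otimes> a \<otimes> k"
    by auto
  have "g \<otimes> h \<otimes> inv g = inv (k \<otimes> inv g) \<otimes> a \<otimes> (k \<otimes> inv g)"
    using h k g a A by (auto simp: inv_mult_group m_assoc)
  then show "g \<otimes> h \<otimes> inv g \<in> (\<Union>g\<in>carrier G. (\<lambda>a. inv g \<otimes> a \<otimes> g) ` A)"
    using k g a by auto
qed

lemma normal_closure_incl:
  assumes A: "A \<subseteq> carrier G" and a: "a \<in> A"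
  shows "a \<in> normal_closure G A"
proof -
  have "a = inv \<one> \<otimes> a \<otimes> \<one>" using a A by auto
  then have "a \<in> (\<Union>g\<in>carrier G. (\<lambda>a. inv g \<otimes> a \<otimes> g) ` A)" using a by force
  then show ?thesis unfolding normal_closure_def by (rule generate.incl)
qed

lemma rhoS_eq_one_iff:
  assumes Y: "Y \<subseteq> carrier G" and g: "g \<in> carrier G"
  shows "rhoS G Y S g = \<one>\<^bsub>quotS G Y S\<^esub> \<longleftrightarrow> g \<in> normal_closure G (Y - S)"
proof -
  have "subgroup (normal_closure G (Y - S)) G"
    using normal_closure_normal Y normal_imp_subgroup by blast
  then show ?thesis unfolding rhoS_def quotS_def one_FactGroup
    using coset_join1 coset_join2 g by blast
qed

lemma rho_family_eq_one_iff:
  "rho_family G Y F g = \<one>\<^bsub>product_group F (quotS G Y)\<^esub> \<longleftrightarrow>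
     (\<forall>S\<in>F. rhoS G Y S g = \<one>\<^bsub>quotS G Y S\<^esub>)"
  unfolding rho_family_def one_product_group by (auto simp: fun_eq_iff)

lemma kernel_rho_family:
  assumes Y: "Y \<subseteq> carrier G"
  shows "kernel G (product_group F (quotS G Y)) (rho_family G Y F) = family_kernel G Y F"
  unfolding kernel_def family_kernel_def rho_family_eq_one_iff
  using rhoS_eq_one_iff[OF Y] by blast

lemma family_kernel_normal:
  assumes Y: "Y \<subseteq> carrier G"
  shows "family_kernel G Y F \<lhd> G"
proof -
  have N: "normal_closure G (Y - S) \<lhd> G" for S
    using Y by (intro normal_closure_normal) blast
  then have sub: "subgroup (normal_closure G (Y - S)) G" for S
    using normal_imp_subgroup by blast
  have "subgroup (family_kernel G Y F) G"
    unfolding family_kernel_def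
    by (rule subgroupI) (auto simp: sub subgroup.one_closed subgroup.m_inv_closed subgroup.m_closed)
  then show ?thesis
    by (rule normal_invI) (auto simp: family_kernel_def intro: normal_invE(2)[OF N])
qed

lemma retractive_generate_inter_normal_closure:
  assumes Y: "Y \<subseteq> carrier G" and ret: "retractive G Y T"
    and h: "h \<in> generate G T" and h_N: "h \<in> normal_closure G (Y - T)"
  shows "h = \<one>"
proof (cases "T = {}")
  case True
  then show ?thesis using h generate_empty by auto
next
  case False
  then have inj: "inj_on (rhoS G Y T) (generate G T)"
    using ret unfolding retractive_def by blast
  have "h \<in> carrier G"
    using ret Y h generate_incl unfolding retractive_def by blast
  moreover have "\<one> \<in> normal_closure G (Y - T)"
    using normal_closure_normal[of "Y - T"] Y normal_imp_subgroup subgroup.one_closed by blast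
  ultimately have "rhoS G Y T h = rhoS G Y T \<one>"
    using rhoS_eq_one_iff[OF Y, of h T] rhoS_eq_one_iff[OF Y one_closed, of T] h_N by simp
  then show ?thesis using inj h generate.one by (auto dest: inj_onD)
qed

lemma monic_comm_closed:
  assumes Y: "Y \<subseteq> carrier G" and q: "q \<in> monic_comm G Y"
  shows "q \<in> carrier G"
  using q by induction (use Y in auto)

lemma monic_comm_in_generate_or_normal_closure:
  assumes Y: "Y \<subseteq> carrier G" and q: "q \<in> monic_comm G Y" and S: "S \<subseteq> Y"
  shows "q \<in> generate G S \<or> q \<in> normal_closure G (Y - S)"
proof -
  have N: "normal_closure G (Y - S) \<lhd> G"
    using Y by (intro normal_closure_normal) blast
  have sub_S: "subgroup (generate G S) G" and sub_N: "subgroup (normal_closure G (Y - S)) G"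
    using S Y N generate_is_subgroup normal_imp_subgroup by blast+
  from q show ?thesis
  proof induction
    case (gen x)
    then show ?case using Y normal_closure_incl[of "Y - S" x] by (auto intro: generate.incl)
  next
    case (gen_inv x)
    then show ?case using Y normal_closure_incl[of "Y - S" x] subgroup.m_inv_closed[OF sub_N]
      by (auto intro: generate.inv)
  next
    case (comm x y)
    have "x \<in> carrier G" "y \<in> carrier G"
      using comm.hyps monic_comm_closed[OF Y] by auto
    then show ?case
      using comm.IH normal_commutator_closed[OF N] subgroup_commutator_closed[OF sub_S] by blast
  qed
qed

lemma generate_monic_comm_inter_normal:
  assumes Y: "Y \<subseteq> carrier G" and gen: "generate G Y = carrier G" and N: "N \<lhd> G"
  shows "generate G (monic_comm G Y \<inter> N) \<lhd> G"
proof (rule generate_normal_if_conj_generators[OF _ Y gen])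
  show "monic_comm G Y \<inter> N \<subseteq> carrier G" using monic_comm_closed[OF Y] by blast
next
  fix y a assume y: "y \<in> Y" and a: "a \<in> monic_comm G Y \<inter> N"
  have yc: "y \<in> carrier G" and ac: "a \<in> carrier G"
    using y a Y monic_comm_closed[OF Y] by auto
  have "commutator G a y' \<in> monic_comm G Y \<inter> N" if "y' = y \<or> y' = inv y" for y'
    using that a y yc ac
    by (auto intro: monic_comm.intros normal_commutator_closed[OF N])
  then have "a \<otimes> commutator G a y' \<in> generate G (monic_comm G Y \<inter> N)" if "y' = y \<or> y' = inv y" for y'
    using that a by (blast intro: generate.eng generate.incl)
  then show "y \<otimes> a \<otimes> inv y \<in> generate G (monic_comm G Y \<inter> N)"
    and "inv y \<otimes> a \<otimes> y \<in> generate G (monic_comm G Y \<inter> N)"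
    using conj_eq_mult_commutator[OF ac yc] by auto
qed

lemma family_kernel_insert_subset_generate_monic:
  assumes Y: "Y \<subseteq> carrier G" and gen: "generate G Y = carrier G" and ret: "retractive G Y T"
    and IH: "family_kernel G Y F \<subseteq> generate G (monic_comm G Y \<inter> family_kernel G Y F)"
  shows "family_kernel G Y (insert T F)
           \<subseteq> generate G (monic_comm G Y \<inter> family_kernel G Y (insert T F))"
proof
  let ?M = "monic_comm G Y" and ?K = "family_kernel G Y (insert T F)"
  let ?L = "generate G (?M \<inter> ?K)"
  have T: "T \<subseteq> Y" using ret unfolding retractive_def by blast
  have K: "subgroup ?K G" using family_kernel_normal[OF Y] normal_imp_subgroup by blast
  have L: "?L \<lhd> G" using generate_monic_comm_inter_normal[OF Y gen family_kernel_normal[OF Y]] .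
  have L_K: "?L \<subseteq> ?K" using generate_subgroup_incl[OF _ K] by blast
  have sub_T: "subgroup (generate G T) G" using generate_is_subgroup T Y by blast
  have "?M \<inter> family_kernel G Y F \<subseteq> ?L \<union> generate G T"
  proof
    fix m assume m: "m \<in> ?M \<inter> family_kernel G Y F"
    with monic_comm_in_generate_or_normal_closure[OF Y _ T, of m]
    have "m \<in> generate G T \<or> m \<in> ?M \<inter> ?K"
      unfolding family_kernel_def by blast
    then show "m \<in> ?L \<union> generate G T" by (blast intro: generate.incl)
  qed
  then have K'_LT: "family_kernel G Y F \<subseteq> ?L <#> generate G T"
    using IH generate_subset_normal_set_mult[OF L sub_T] by blast
  fix g assume g: "g \<in> ?K"
  then have "g \<in> ?L <#> generate G T" using K'_LT unfolding family_kernel_def by blast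
  then obtain l h where l: "l \<in> ?L" and h: "h \<in> generate G T" and g_lh: "g = l \<otimes> h"
    unfolding set_mult_def by blast
  have lc: "l \<in> carrier G" and hc: "h \<in> carrier G"
    using l h L_K subgroup.subset[OF K] subgroup.subset[OF sub_T] by auto
  have "h = inv l \<otimes> g" using g_lh lc hc by (simp add: m_assoc[symmetric])
  then have "h \<in> ?K" using g l L_K K by (simp add: subgroup.m_closed subgroup.m_inv_closed subsetD)
  then have "h \<in> normal_closure G (Y - T)" unfolding family_kernel_def by blast
  then have "h = \<one>" by (rule retractive_generate_inter_normal_closure[OF Y ret h])
  then show "g \<in> ?L" using g_lh lc l by simp
qed

lemma family_kernel_subset_generate_monic:
  assumes Y: "Y \<subseteq> carrier G" and gen: "generate G Y = carrier G"
    and F: "finite F" and ret: "\<forall>S\<in>F. retractive G Y S"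
  shows "family_kernel G Y F \<subseteq> generate G (monic_comm G Y \<inter> family_kernel G Y F)"
  using F ret
proof (induction F rule: finite_induct)
  case empty
  have "monic_comm G Y \<inter> family_kernel G Y {} = monic_comm G Y"
    using monic_comm_closed[OF Y] unfolding family_kernel_def by auto
  moreover have "family_kernel G Y {} = generate G Y"
    using gen unfolding family_kernel_def by simp
  moreover have "generate G Y \<subseteq> generate G (monic_comm G Y)"
    by (rule mono_generate) (auto intro: monic_comm.gen)
  ultimately show ?case by simp
next
  case (insert T F)
  then show ?case using family_kernel_insert_subset_generate_monic[OF Y gen] by simp
qed

lemma transverse_monic_comm_in_family_kernel:
  assumes Y: "Y \<subseteq> carrier G" and F: "\<forall>S\<in>F. S \<subseteq> Y"
    and q: "q \<in> monic_comm G Y" and tr: "transverse F (support G Y F q)"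
  shows "q \<in> family_kernel G Y F"
proof -
  have "q \<in> normal_closure G (Y - S)" if S: "S \<in> F" for S
  proof -
    have "\<not> support G Y F q \<subseteq> S" using tr S unfolding transverse_def by blast
    then have "q \<notin> generate G S" using S unfolding support_def by blast
    then show ?thesis using monic_comm_in_generate_or_normal_closure[OF Y q] F S by blast
  qed
  then show ?thesis
    using monic_comm_closed[OF Y q] unfolding family_kernel_def by blast
qed

lemma family_kernel_nontrivial_transverse_support:
  assumes Y: "Y \<subseteq> carrier G" and gen: "generate G Y = carrier G"
    and ret: "\<forall>S\<in>F. retractive G Y S"
    and q: "q \<in> family_kernel G Y F" and q_ne: "q \<noteq> \<one>"
  shows "transverse F (support G Y F q)"
proof -
  have not_gen: "q \<notin> generate G S" if S: "S \<in> F" for S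
  proof
    assume "q \<in> generate G S"
    moreover have "q \<in> normal_closure G (Y - S)"
      using q S unfolding family_kernel_def by blast
    ultimately have "q = \<one>"
      by (rule retractive_generate_inter_normal_closure[OF Y ret[rule_format, OF S]])
    with q_ne show False by contradiction
  qed
  then have "support G Y F q = Y" unfolding support_def by blast
  moreover have "q \<in> generate G Y" using q gen unfolding family_kernel_def by blast
  then have "\<not> Y \<subseteq> S" if "S \<in> F" for S
    using that not_gen mono_generate by blast
  ultimately show ?thesis unfolding transverse_def by simp
qed

end

theorem mainTheorem6:
  fixes G :: "('a, 'b) monoid_scheme" and Y :: "'a set" and F :: "'a set set"
  assumes "group G"
    and "finite Y" and "Y \<subseteq> carrier G" and "generate G Y = carrier G"
    and "retractive_family G Y F"
  shows "kernel G (product_group F (quotS G Y)) (rho_family G Y F)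
           = generate G {q \<in> monic_comm G Y. transverse F (support G Y F q)}"
proof -
  interpret group G by fact
  note Y = assms(3) and gen = assms(4)
  let ?K = "family_kernel G Y F" and ?Tr = "{q \<in> monic_comm G Y. transverse F (support G Y F q)}"
  have ret: "\<forall>S\<in>F. retractive G Y S" using assms(5) unfolding retractive_family_def by blast
  then have "F \<subseteq> Pow Y" unfolding retractive_def by blast
  then have "finite F" by (meson assms(2) finite_Pow_iff finite_subset)
  have K: "subgroup ?K G" using family_kernel_normal[OF Y] normal_imp_subgroup by blast
  have Tr_K: "?Tr \<subseteq> ?K"
    using transverse_monic_comm_in_family_kernel[OF Y] \<open>F \<subseteq> Pow Y\<close> by blast
  then have Tr: "subgroup (generate G ?Tr) G"
    using subgroup.subset[OF K] by (intro generate_is_subgroup) blast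
  have "monic_comm G Y \<inter> ?K \<subseteq> generate G ?Tr"
    using family_kernel_nontrivial_transverse_support[OF Y gen ret]
    by (auto intro: generate.one generate.incl)
  then have "?K \<subseteq> generate G ?Tr"
    using family_kernel_subset_generate_monic[OF Y gen \<open>finite F\<close> ret] generate_subgroup_incl[OF _ Tr]
    by blast
  moreover have "generate G ?Tr \<subseteq> ?K" using generate_subgroup_incl[OF Tr_K K] .
  ultimately show ?thesis using kernel_rho_family[OF Y] by blast
qed

end
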